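(* In the setting below, if $\mathbb{E}\big[|\eta(X^x_m)-\eta(x)|\big]\to 0$ as $m\to\infty$, then $x$ is a Lebesgue point for $\eta$ with respect to $\mathbb{P}_X$. This holds for any choice of nearest neighbors $X^x_m$, i.e. regardless of how ties are broken.
   Context: Let $(\mathcal{X},d)$ be a metric space with its Borel $\sigma$-algebra, let $(\Omega,\mathcal{F},\mathbb{P})$ be a probability space, and let $X,X_1,X_2,\dots$ be i.i.d. $\mathcal{X}$-valued random variables with common law $\mathbb{P}_X$. For $x\in\mathcal{X}$ and $r>0$ write $B_r=\{x':d(x,x')<r\}$, $\bar B_r=\{x':d(x,x')\le r\}$ and $S_r=\{x':d(x,x')=r\}$. The support of $\mathbb{P}_X$ is the set of $x$ such that $\mathbb{P}_X(\bar B_r(x))>0$ for all $r>0$. Fix $x$ in the support of $\mathbb{P}_X$ and a bounded measurable $\eta:\mathcal{X}\to\mathbb{R}$. For each $m\in\mathbb{N}$, a nearest neighbor of $x$ among $X_1,\dots,X_m$ is a measurable $X^x_m:\Omega\to\mathcal{X}$ with $X^x_m(\omega)\in\arg\min_{x'\in\{X_1(\omega),\dots,X_m(\omega)\}}d(x,x')$ for every $\omega\in\Omega$; fix such a sequence $(X^x_m)_{m\in\mathbb{N}}$. The point $x$ is a Lebesgue point (for $\eta$ with respect to $\mathbb{P}_X$) if $\mathbb{E}[\mathbb{I}_{\bar B_r}(X)\,|\eta(X)-\eta(x)|]/\mathbb{P}_X(\bar B_r)\to 0$ as $r\to 0^+$. *)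

theory Defs
  imports "HOL-Probability.Probability"
begin

definition in_support :: "'a::metric_space measure \<Rightarrow> 'a \<Rightarrow> bool" where
  "in_support P x \<longleftrightarrow> (\<forall>r>0. measure P (cball x r) > 0)"

definition lebesgue_point ::
    "'w measure \<Rightarrow> ('w \<Rightarrow> 'a::metric_space) \<Rightarrow> ('a \<Rightarrow> real) \<Rightarrow> 'a \<Rightarrow> bool" where
  "lebesgue_point M X \<eta> x \<longleftrightarrow>
     ((\<lambda>r. (\<integral>\<omega>. indicator (cball x r) (X \<omega>) * \<bar>\<eta> (X \<omega>) - \<eta> x\<bar> \<partial>M)
            / measure (distr M borel X) (cball x r)) \<longlongrightarrow> 0) (at_right 0)"

definition is_nearest_neighbor ::
    "'w measure \<Rightarrow> (nat \<Rightarrow> 'w \<Rightarrow> 'a::metric_space) \<Rightarrow> 'a \<Rightarrow> nat \<Rightarrow> ('w \<Rightarrow> 'a) \<Rightarrow> bool" where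
  "is_nearest_neighbor M Xs x m NN \<longleftrightarrow>
     NN \<in> measurable M borel \<and>
     (\<forall>\<omega>\<in>space M. (\<exists>i\<in>{1..m}. NN \<omega> = Xs i \<omega>) \<and>
                    (\<forall>i\<in>{1..m}. dist x (NN \<omega>) \<le> dist x (Xs i \<omega>)))"

end

theory Submission
  imports Defs
begin

text \<open>Write \<open>B = cball x r\<close> and \<open>p = P\<^sub>X(B)\<close>. Whenever exactly one of \<open>X\<^sub>1, \<dots>, X\<^sub>m\<close> lies in \<open>B\<close>,
  that sample is the nearest neighbour of \<open>x\<close>. Summing over which sample it is and using
  independence gives
  \<open>E |\<eta>(X\<^sup>x\<^sub>m) - \<eta>(x)| \<ge> m \<cdot> E[1\<^sub>B(X) |\<eta>(X) - \<eta>(x)|] \<cdot> (1 - p)\<^bsup>m-1\<^esup>\<close>.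
  If \<open>x\<close> is not an atom then \<open>p \<rightarrow> 0\<close>, and choosing \<open>m \<approx> 1/p\<close> keeps \<open>(1 - p)\<^bsup>m-1\<^esup> \<ge> e\<^sup>-\<^sup>2\<close>,
  so the Lebesgue ratio is at most \<open>2e\<^sup>2\<close> times the nearest neighbour error for that \<open>m\<close>,
  which tends to \<open>0\<close>. If \<open>x\<close> is an atom the integrand vanishes at \<open>x\<close>, so the numerator is
  bounded by a multiple of \<open>P\<^sub>X(B - {x}) \<rightarrow> 0\<close> while the denominator stays above \<open>P\<^sub>X{x} > 0\<close>.\<close>

text \<open>\<open>sole_member_weight B f I i y\<close> is \<open>f (y i)\<close> if \<open>y i\<close> is the only point of the family
  \<open>y j, j \<in> I\<close> in \<open>B\<close>, and \<open>0\<close> otherwise; the product form factorizes under independence.\<close>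

definition sole_member_weight :: "'a set \<Rightarrow> ('a \<Rightarrow> real) \<Rightarrow> 'i set \<Rightarrow> 'i \<Rightarrow> ('i \<Rightarrow> 'a) \<Rightarrow> real"
  where "sole_member_weight B f I i y =
    (\<Prod>j\<in>I. if j = i then indicator B (y j) * f (y j) else indicator (- B) (y j))"

lemma sum_sole_member_weight_cball_le_nearest:
  fixes y :: "'i \<Rightarrow> 'a::metric_space" and f :: "'a \<Rightarrow> real"
  assumes I: "finite I" "k \<in> I"
    and nearest: "\<And>i. i \<in> I \<Longrightarrow> dist x (y k) \<le> dist x (y i)"
    and f_nonneg: "\<And>z. 0 \<le> f z"
  shows "(\<Sum>i\<in>I. sole_member_weight (cball x r) f I i y) \<le> f (y k)"
proof -
  let ?w = "\<lambda>i. sole_member_weight (cball x r) f I i y"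
  have weight_le: "?w i \<le> (if i = k then f (y k) else 0)" if i: "i \<in> I" for i
  proof (cases "y i \<in> cball x r")
    case False
    then have "?w i = 0"
      unfolding sole_member_weight_def using I i by (intro prod_zero bexI[of _ i]) auto
    then show ?thesis using f_nonneg by simp
  next
    case True
    then have yk: "y k \<in> cball x r" using nearest[OF i] by simp
    show ?thesis
    proof (cases "i = k")
      case False
      then have "?w i = 0"
        unfolding sole_member_weight_def using I yk by (intro prod_zero bexI[of _ k]) auto
      then show ?thesis using False by simp
    next
      case True
      have "?w i = f (y k) * (\<Prod>j\<in>I - {k}. indicator (- cball x r) (y j))"
        unfolding sole_member_weight_def using I True yk by (subst prod.remove[of _ k]) auto
      also have "\<dots> \<le> f (y k)"
        using f_nonneg by (intro mult_left_le prod_le_1) auto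
      finally show ?thesis using True by simp
    qed
  qed
  have "(\<Sum>i\<in>I. ?w i) \<le> (\<Sum>i\<in>I. if i = k then f (y k) else 0)"
    by (rule sum_mono) (rule weight_le)
  also have "\<dots> = f (y k)" using I by simp
  finally show ?thesis .
qed

lemma (in prob_space) integral_indicator_compl:
  assumes X: "X \<in> measurable M borel" and B: "B \<in> sets borel"
  shows "(\<integral>\<omega>. indicator (- B) (X \<omega>) \<partial>M) = 1 - measure (distr M borel X) B"
proof -
  interpret P: prob_space "distr M borel X" by (rule prob_space_distr[OF X])
  have "- B \<in> sets borel" using B by (simp add: Compl_eq_Diff_UNIV)
  then have "(\<integral>\<omega>. indicator (- B) (X \<omega>) \<partial>M) = measure (distr M borel X) (space (distr M borel X) - B)"
    by (simp add: integral_distr[OF X, symmetric] Compl_eq_Diff_UNIV)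
  also have "\<dots> = 1 - measure (distr M borel X) B"
    using B by (intro P.prob_compl) simp
  finally show ?thesis .
qed

lemma (in prob_space)
  fixes X :: "'a \<Rightarrow> 'b::topological_space" and Xs :: "'i \<Rightarrow> 'a \<Rightarrow> 'b" and f :: "'b \<Rightarrow> real"
  assumes X: "X \<in> measurable M borel"
    and Xs: "\<And>j. j \<in> I \<Longrightarrow> Xs j \<in> measurable M borel"
    and identical: "\<And>j. j \<in> I \<Longrightarrow> distr M borel (Xs j) = distr M borel X"
    and indep: "indep_vars (\<lambda>_. borel) Xs I"
    and I: "finite I" "i \<in> I"
    and B: "B \<in> sets borel"
    and f: "f \<in> borel_measurable borel" "\<And>y. \<bar>f y\<bar> \<le> K"
  shows integrable_sole_member_weight:
      "integrable M (\<lambda>\<omega>. sole_member_weight B f I i (\<lambda>j. Xs j \<omega>))"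
    and integral_sole_member_weight:
      "(\<integral>\<omega>. sole_member_weight B f I i (\<lambda>j. Xs j \<omega>) \<partial>M)
         = (\<integral>\<omega>. indicator B (X \<omega>) * f (X \<omega>) \<partial>M) * (1 - measure (distr M borel X) B) ^ (card I - 1)"
proof -
  define F where "F j y = (if j = i then indicator B y * f y else indicator (- B) y)" for j y
  have weight_eq: "sole_member_weight B f I i (\<lambda>j. Xs j \<omega>) = (\<Prod>j\<in>I. F j (Xs j \<omega>))" for \<omega>
    by (simp add: sole_member_weight_def F_def)
  have compl_B: "- B \<in> sets borel" using B by (simp add: Compl_eq_Diff_UNIV)
  have F_borel: "F j \<in> borel_measurable borel" for j
    unfolding F_def using f(1) B compl_B
    by (cases "j = i") (auto intro!: borel_measurable_times borel_measurable_indicator)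
  have F_bounded: "\<bar>F j y\<bar> \<le> \<bar>K\<bar> + 1" for j y
    using f(2)[of y] by (auto simp: F_def indicator_def)
  have F_Xs_integrable: "integrable M (\<lambda>\<omega>. F j (Xs j \<omega>))" if "j \<in> I" for j
    by (intro integrable_const_bound[where B="\<bar>K\<bar> + 1"] AE_I2 measurable_compose[OF Xs[OF that] F_borel])
      (simp add: F_bounded)
  have indep_F: "indep_vars (\<lambda>_. borel) (\<lambda>j \<omega>. F j (Xs j \<omega>)) I"
    by (rule indep_vars_compose2[OF indep F_borel])
  show "integrable M (\<lambda>\<omega>. sole_member_weight B f I i (\<lambda>j. Xs j \<omega>))"
    unfolding weight_eq by (rule indep_vars_integrable[OF I(1) indep_F F_Xs_integrable])
  define g where "g = (\<integral>\<omega>. indicator B (X \<omega>) * f (X \<omega>) \<partial>M)"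
  define p where "p = measure (distr M borel X) B"
  have F_Xs_integral: "(\<integral>\<omega>. F j (Xs j \<omega>) \<partial>M) = (if j = i then g else 1 - p)" if "j \<in> I" for j
  proof -
    have "(\<integral>\<omega>. F j (Xs j \<omega>) \<partial>M) = (\<integral>\<omega>. F j (X \<omega>) \<partial>M)"
      using that identical
      by (simp add: integral_distr[OF Xs F_borel, symmetric] integral_distr[OF X F_borel, symmetric])
    then show ?thesis
      using integral_indicator_compl[OF X B] by (cases "j = i") (simp_all add: F_def g_def p_def)
  qed
  have "(\<integral>\<omega>. (\<Prod>j\<in>I. F j (Xs j \<omega>)) \<partial>M) = (\<Prod>j\<in>I. \<integral>\<omega>. F j (Xs j \<omega>) \<partial>M)"
    by (rule indep_vars_lebesgue_integral[OF I(1) indep_F F_Xs_integrable])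
  also have "\<dots> = (\<Prod>j\<in>I. if j = i then g else 1 - p)"
    by (rule prod.cong[OF refl F_Xs_integral])
  also have "\<dots> = g * (\<Prod>j\<in>I - {i}. 1 - p)"
    using I by (subst prod.remove[of _ i]) (auto intro!: prod.cong)
  also have "\<dots> = g * (1 - p) ^ (card I - 1)"
    using I by simp
  finally show "(\<integral>\<omega>. sole_member_weight B f I i (\<lambda>j. Xs j \<omega>) \<partial>M) = g * (1 - p) ^ (card I - 1)"
    unfolding weight_eq .
qed

lemma (in prob_space) nearest_neighbor_integral_ge:
  fixes X :: "'a \<Rightarrow> 'b::metric_space" and Xs :: "nat \<Rightarrow> 'a \<Rightarrow> 'b" and f :: "'b \<Rightarrow> real"
  assumes X: "X \<in> measurable M borel"
    and Xs: "\<And>i. i \<in> {1..m} \<Longrightarrow> Xs i \<in> measurable M borel"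
    and identical: "\<And>i. i \<in> {1..m} \<Longrightarrow> distr M borel (Xs i) = distr M borel X"
    and indep: "indep_vars (\<lambda>_. borel) Xs {1..m}"
    and f: "f \<in> borel_measurable borel" "\<And>y. 0 \<le> f y" "\<And>y. f y \<le> K"
    and nearest: "is_nearest_neighbor M Xs x m N"
  shows "real m * (\<integral>\<omega>. indicator (cball x r) (X \<omega>) * f (X \<omega>) \<partial>M)
           * (1 - measure (distr M borel X) (cball x r)) ^ (m - 1)
         \<le> (\<integral>\<omega>. f (N \<omega>) \<partial>M)"
proof -
  let ?w = "\<lambda>i \<omega>. sole_member_weight (cball x r) f {1..m} i (\<lambda>j. Xs j \<omega>)"
  have f_abs: "\<bar>f y\<bar> \<le> K" for y using f(2,3)[of y] by simp
  note weight = integrable_sole_member_weight[OF X Xs identical indep _ _ _ f(1) f_abs]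
    integral_sole_member_weight[OF X Xs identical indep _ _ _ f(1) f_abs]
  have pointwise: "(\<Sum>i\<in>{1..m}. ?w i \<omega>) \<le> f (N \<omega>)" if "\<omega> \<in> space M" for \<omega>
  proof -
    have "\<exists>k\<in>{1..m}. N \<omega> = Xs k \<omega>"
      and closest: "\<And>i. i \<in> {1..m} \<Longrightarrow> dist x (N \<omega>) \<le> dist x (Xs i \<omega>)"
      using nearest that by (simp_all add: is_nearest_neighbor_def)
    then obtain k where k: "k \<in> {1..m}" "N \<omega> = Xs k \<omega>" by blast
    show ?thesis
      unfolding k(2) using closest[unfolded k(2)] f(2)
      by (intro sum_sole_member_weight_cball_le_nearest[where y="\<lambda>j. Xs j \<omega>", OF _ k(1)]) auto
  qed
  have N_integrable: "integrable M (\<lambda>\<omega>. f (N \<omega>))"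
    using nearest unfolding is_nearest_neighbor_def
    by (intro integrable_const_bound[where B=K] AE_I2 measurable_compose[OF _ f(1)]) (simp_all add: f_abs)
  have "real m * (\<integral>\<omega>. indicator (cball x r) (X \<omega>) * f (X \<omega>) \<partial>M)
          * (1 - measure (distr M borel X) (cball x r)) ^ (m - 1)
        = (\<Sum>i\<in>{1..m}. (\<integral>\<omega>. indicator (cball x r) (X \<omega>) * f (X \<omega>) \<partial>M)
            * (1 - measure (distr M borel X) (cball x r)) ^ (card {1..m} - 1))"
    by simp
  also have "\<dots> = (\<Sum>i\<in>{1..m}. \<integral>\<omega>. ?w i \<omega> \<partial>M)"
    by (rule sum.cong[OF refl], rule weight(2)[symmetric]) auto
  also have "\<dots> = (\<integral>\<omega>. (\<Sum>i\<in>{1..m}. ?w i \<omega>) \<partial>M)"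
    by (rule Bochner_Integration.integral_sum[symmetric], rule weight(1)) auto
  also have "\<dots> \<le> (\<integral>\<omega>. f (N \<omega>) \<partial>M)"
    by (rule integral_mono[OF Bochner_Integration.integrable_sum N_integrable pointwise], rule weight(1))
      auto
  finally show ?thesis .
qed

lemma measure_cball_tendsto_measure_singleton:
  fixes M :: "'a::metric_space measure"
  assumes "finite_measure M" "sets M = sets borel"
  shows "((\<lambda>r. measure M (cball x r)) \<longlongrightarrow> measure M {x}) (at_right 0)"
proof (rule tendsto_at_right_sequentially[where b=1])
  fix S :: "nat \<Rightarrow> real"
  assume S: "\<And>n. 0 < S n" "decseq S" "S \<longlonglongrightarrow> 0"
  have "(\<lambda>n. measure M (cball x (S n))) \<longlonglongrightarrow> measure M (\<Inter>n. cball x (S n))"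
  proof (rule finite_measure.finite_Lim_measure_decseq[OF assms(1)])
    show "range (\<lambda>n. cball x (S n)) \<subseteq> sets M"
      unfolding assms(2) by (intro image_subsetI borel_closed closed_cball)
    show "decseq (\<lambda>n. cball x (S n))"
      by (intro monotoneI subset_cball decseqD[OF S(2)])
  qed
  also have "(\<Inter>n. cball x (S n)) = {x}"
  proof (intro equalityI subsetI)
    fix z assume "z \<in> (\<Inter>n. cball x (S n))"
    then have "dist x z \<le> 0"
      by (intro LIMSEQ_le_const[OF S(3)]) auto
    then show "z \<in> {x}" by simp
  qed (use S(1) in \<open>simp add: less_imp_le\<close>)
  finally show "(\<lambda>n. measure M (cball x (S n))) \<longlonglongrightarrow> measure M {x}" .
qed simp

lemma integral_cball_le_measure_punctured_cball:
  fixes P :: "'a::metric_space measure" and f :: "'a \<Rightarrow> real"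
  assumes P: "finite_measure P" "sets P = sets borel"
    and f: "f \<in> borel_measurable borel" "\<And>y. 0 \<le> f y" "\<And>y. f y \<le> K" "f x = 0"
    and r: "0 \<le> r"
  shows "(\<integral>y. indicator (cball x r) y * f y \<partial>P) \<le> K * (measure P (cball x r) - measure P {x})"
proof -
  interpret finite_measure P by (rule P(1))
  have "0 \<le> K" using f(2,3)[of x] by linarith
  have "(\<integral>y. indicator (cball x r) y * f y \<partial>P) \<le> (\<integral>y. K * indicator (cball x r - {x}) y \<partial>P)"
  proof (rule integral_mono)
    have "(\<lambda>y. indicator (cball x r) y * f y) \<in> borel_measurable P"
      unfolding measurable_cong_sets[OF P(2) refl]
      by (intro borel_measurable_times borel_measurable_indicator f(1)) simp
    then show "integrable P (\<lambda>y. indicator (cball x r) y * f y)"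
      using f(2,3) \<open>0 \<le> K\<close> by (intro integrable_const_bound[where B=K]) (auto simp: indicator_def)
    show "integrable P (\<lambda>y. K * indicator (cball x r - {x}) y)"
      using P(2) by (intro integrable_mult_right integrable_real_indicator)
        (auto simp: less_top[symmetric])
    show "indicator (cball x r) y * f y \<le> K * indicator (cball x r - {x}) y" for y
      using f(2,3)[of y] f(4) by (cases "y = x") (auto simp: indicator_def)
  qed
  also have "\<dots> = K * measure P (cball x r - {x})"
    using P(2) by simp
  also have "measure P (cball x r - {x}) = measure P (cball x r) - measure P {x}"
    using P(2) r by (intro finite_measure_Diff) auto
  finally show ?thesis .
qed

lemma exp_minus_two_le_one_minus_power:
  fixes q :: real
  assumes "0 < q" "q \<le> 1/2" "real k * q \<le> 1"
  shows "exp (-2) \<le> (1 - q) ^ k"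
proof -
  have "-2 * q \<le> - q - 2 * q\<^sup>2" using assms by (simp add: power2_eq_square)
  also have "\<dots> \<le> ln (1 - q)" using assms by (intro ln_one_minus_pos_lower_bound) auto
  finally have "real k * (-2 * q) \<le> real k * ln (1 - q)"
    by (rule mult_left_mono) simp
  moreover have "-2 \<le> real k * (-2 * q)" using assms(3) by simp
  ultimately have "-2 \<le> real k * ln (1 - q)" by linarith
  then have "exp (-2) \<le> exp (real k * ln (1 - q))" by simp
  also have "\<dots> = (1 - q) ^ k" using assms by (simp add: exp_of_nat_mult)
  finally show ?thesis .
qed

lemma ratio_tendsto_zero_at_atom:
  fixes g p :: "real \<Rightarrow> real"
  assumes p: "(p \<longlongrightarrow> p0) (at_right 0)" "0 < p0" "\<And>r. 0 < r \<Longrightarrow> p0 \<le> p r"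
    and g: "\<And>r. 0 \<le> g r" "\<And>r. 0 < r \<Longrightarrow> g r \<le> C * (p r - p0)"
  shows "((\<lambda>r. g r / p r) \<longlongrightarrow> 0) (at_right 0)"
proof (rule tendsto_sandwich[of "\<lambda>_. 0" _ _ "\<lambda>r. C * (p r - p0) / p0"])
  show "eventually (\<lambda>r. 0 \<le> g r / p r) (at_right 0)"
  proof (rule eventually_at_rightI[of 0 1])
    fix r :: real assume "r \<in> {0<..<1}"
    then show "0 \<le> g r / p r" using g(1)[of r] p(2) p(3)[of r] by simp
  qed simp
  show "eventually (\<lambda>r. g r / p r \<le> C * (p r - p0) / p0) (at_right 0)"
  proof (rule eventually_at_rightI[of 0 1])
    fix r :: real assume "r \<in> {0<..<1}"
    then have "0 < r" by simp
    have "g r / p r \<le> g r / p0"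
      using g(1) p(2) p(3)[OF \<open>0 < r\<close>] by (intro divide_left_mono) auto
    also have "\<dots> \<le> C * (p r - p0) / p0"
      using g(2)[OF \<open>0 < r\<close>] p(2) by (intro divide_right_mono) auto
    finally show "g r / p r \<le> C * (p r - p0) / p0" .
  qed simp
  have "((\<lambda>r. C * (p r - p0) / p0) \<longlongrightarrow> C * (p0 - p0) / p0) (at_right 0)"
    by (intro tendsto_intros p(1)) (use p(2) in simp)
  then show "((\<lambda>r. C * (p r - p0) / p0) \<longlongrightarrow> 0) (at_right 0)" by simp
qed simp

lemma divide_le_floor_inverse_mult_power:
  fixes q a :: real
  assumes q: "0 < q" "q \<le> 1/2" and a: "0 \<le> a"
  defines "k \<equiv> nat \<lfloor>inverse q\<rfloor>"
  shows "1 \<le> k" and "a / q \<le> 2 * exp 2 * (real k * a * (1 - q) ^ (k - 1))"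
proof -
  have inverse_q: "2 \<le> inverse q" using q by (simp add: field_simps)
  have k: "real k \<le> inverse q" "inverse q < real k + 1"
    unfolding k_def using inverse_q by linarith+
  show "1 \<le> k" using k inverse_q by linarith
  have "real (k - 1) * q \<le> inverse q * q"
    using k q by (intro mult_right_mono) auto
  then have "exp (-2) \<le> (1 - q) ^ (k - 1)"
    using q by (intro exp_minus_two_le_one_minus_power) simp_all
  have "a / q \<le> a * (2 * real k)"
    using k inverse_q a by (simp add: divide_inverse mult_left_mono)
  also have "\<dots> = 2 * exp 2 * (real k * a * exp (-2))"
    by (simp add: exp_minus field_simps)
  also have "\<dots> \<le> 2 * exp 2 * (real k * a * (1 - q) ^ (k - 1))"
    using \<open>exp (-2) \<le> _\<close> a by (intro mult_left_mono) auto
  finally show "a / q \<le> 2 * exp 2 * (real k * a * (1 - q) ^ (k - 1))" .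
qed

lemma ratio_tendsto_zero_of_nearest_neighbor_bound:
  fixes g p :: "real \<Rightarrow> real" and E :: "nat \<Rightarrow> real"
  assumes E: "E \<longlonglongrightarrow> 0"
    and p: "(p \<longlongrightarrow> 0) (at_right 0)" "\<And>r. 0 < r \<Longrightarrow> 0 < p r"
    and g: "\<And>r. 0 \<le> g r"
    and bound: "\<And>m r. 1 \<le> m \<Longrightarrow> real m * g r * (1 - p r) ^ (m - 1) \<le> E m"
  shows "((\<lambda>r. g r / p r) \<longlongrightarrow> 0) (at_right 0)"
proof -
  define m where "m r = nat \<lfloor>inverse (p r)\<rfloor>" for r
  have "filterlim (\<lambda>r. inverse (p r)) at_top (at_right 0)"
    using p by (intro filterlim_inverse_at_top) (auto intro: eventually_at_rightI[of 0 1])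
  then have m: "filterlim m at_top (at_right 0)"
    unfolding m_def
    by (rule filterlim_compose[OF filterlim_nat_sequentially filterlim_compose[OF filterlim_floor_sequentially]])
  have small: "eventually (\<lambda>r. 0 < r \<and> p r < 1/2) (at_right 0)"
    using order_tendstoD(2)[OF p(1), of "1/2"] by (intro eventually_conj eventually_at_right_less) auto
  show ?thesis
  proof (rule tendsto_sandwich[of "\<lambda>_. 0" _ _ "\<lambda>r. 2 * exp 2 * E (m r)"])
    show "eventually (\<lambda>r. 0 \<le> g r / p r) (at_right 0)"
      using small by eventually_elim (use g p(2) in \<open>auto intro: divide_nonneg_pos\<close>)
    show "eventually (\<lambda>r. g r / p r \<le> 2 * exp 2 * E (m r)) (at_right 0)"
      using small
    proof eventually_elim
      case (elim r)
      then have q: "0 < p r" "p r \<le> 1/2" using p(2) by auto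
      note m_bound = divide_le_floor_inverse_mult_power[OF q g, folded m_def]
      show ?case
        using order_trans[OF m_bound(2) mult_left_mono[OF bound[OF m_bound(1)]]] by simp
    qed
    show "((\<lambda>r. 2 * exp 2 * E (m r)) \<longlongrightarrow> 0) (at_right 0)"
      using tendsto_mult_right_zero[OF filterlim_compose[OF E m], of "2 * exp 2"]
      by (simp add: o_def mult.commute)
  qed simp
qed

lemma cball_ratio_tendsto_zero:
  fixes P :: "'a::metric_space measure" and f :: "'a \<Rightarrow> real" and E :: "nat \<Rightarrow> real"
  assumes P: "finite_measure P" "sets P = sets borel"
    and support: "\<And>r. 0 < r \<Longrightarrow> 0 < measure P (cball x r)"
    and f: "f \<in> borel_measurable borel" "\<And>y. 0 \<le> f y" "\<And>y. f y \<le> K" "f x = 0"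
    and E: "E \<longlonglongrightarrow> 0"
    and bound: "\<And>m r. 1 \<le> m \<Longrightarrow> real m * (\<integral>y. indicator (cball x r) y * f y \<partial>P)
                                    * (1 - measure P (cball x r)) ^ (m - 1) \<le> E m"
  shows "((\<lambda>r. (\<integral>y. indicator (cball x r) y * f y \<partial>P) / measure P (cball x r)) \<longlongrightarrow> 0) (at_right 0)"
proof -
  interpret finite_measure P by (rule P(1))
  define p where "p r = measure P (cball x r)" for r
  define g where "g r = (\<integral>y. indicator (cball x r) y * f y \<partial>P)" for r
  have g_nonneg: "0 \<le> g r" for r
    unfolding g_def using f(2) by (intro integral_nonneg_AE) auto
  have p_lim: "(p \<longlongrightarrow> measure P {x}) (at_right 0)"
    unfolding p_def by (rule measure_cball_tendsto_measure_singleton[OF P])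
  have "((\<lambda>r. g r / p r) \<longlongrightarrow> 0) (at_right 0)"
  proof (cases "measure P {x} = 0")
    case True
    show ?thesis
      using E p_lim support g_nonneg bound unfolding True p_def g_def
      by (intro ratio_tendsto_zero_of_nearest_neighbor_bound) auto
  next
    case False
    show ?thesis
    proof (rule ratio_tendsto_zero_at_atom[OF p_lim _ _ g_nonneg])
      show "0 < measure P {x}" using False by (simp add: zero_less_measure_iff)
      show "measure P {x} \<le> p r" if "0 < r" for r
        unfolding p_def using that P(2) by (intro finite_measure_mono) auto
      show "g r \<le> K * (p r - measure P {x})" if "0 < r" for r
        unfolding g_def p_def using that
        by (intro integral_cball_le_measure_punctured_cball[OF P f]) simp
    qed
  qed
  then show ?thesis by (simp add: g_def p_def)
qed

lemma (in prob_space) indep_vars_if_zero_restrict: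
  assumes "indep_vars (\<lambda>_. N) (\<lambda>i. if i = 0 then X else Xs i) UNIV" "0 \<notin> I"
  shows "indep_vars (\<lambda>_. N) Xs I"
proof -
  have "indep_vars (\<lambda>_. N) (\<lambda>i. if i = 0 then X else Xs i) I"
    by (rule indep_vars_subset[OF assms(1)]) simp
  then show ?thesis by (rule indep_vars_cong[THEN iffD1, rotated 3]) (use assms(2) in auto)
qed

theorem mainTheorem1:
  fixes M :: "'w measure" and X :: "'w \<Rightarrow> 'a::metric_space" and Xs :: "nat \<Rightarrow> 'w \<Rightarrow> 'a"
    and \<eta> :: "'a \<Rightarrow> real" and x :: 'a and NN :: "nat \<Rightarrow> 'w \<Rightarrow> 'a"
  assumes "prob_space M"
    and "X \<in> measurable M borel"
    and "prob_space.indep_vars M (\<lambda>_. borel) (\<lambda>i. if i = 0 then X else Xs i) UNIV"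
    and "\<And>i. i \<ge> 1 \<Longrightarrow> Xs i \<in> measurable M borel"
    and "\<And>i. i \<ge> 1 \<Longrightarrow> distr M borel (Xs i) = distr M borel X"
    and "in_support (distr M borel X) x"
    and "\<eta> \<in> borel_measurable borel"
    and "bounded (range \<eta>)"
    and "\<And>m. m \<ge> 1 \<Longrightarrow> is_nearest_neighbor M Xs x m (NN m)"
    and "(\<lambda>m. \<integral>\<omega>. \<bar>\<eta> (NN m \<omega>) - \<eta> x\<bar> \<partial>M) \<longlonglongrightarrow> 0"
  shows "lebesgue_point M X \<eta> x"
proof -
  interpret prob_space M by (rule assms(1))
  define P where "P = distr M borel X"
  interpret P: prob_space P unfolding P_def by (rule prob_space_distr[OF assms(2)])
  obtain K where K: "\<And>y. \<bar>\<eta> y\<bar> \<le> K" using assms(8) unfolding bounded_iff by auto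
  define f where "f y = \<bar>\<eta> y - \<eta> x\<bar>" for y
  have f_le: "f y \<le> 2 * K" for y
    unfolding f_def using K[of y] K[of x] by (intro order_trans[OF abs_triangle_ineq4]) linarith
  have f: "f \<in> borel_measurable borel" "\<And>y. 0 \<le> f y" "\<And>y. f y \<le> 2 * K" "f x = 0"
    using f_le assms(7) unfolding f_def by simp_all
  have integral_P: "(\<integral>y. indicator (cball x r) y * f y \<partial>P)
      = (\<integral>\<omega>. indicator (cball x r) (X \<omega>) * f (X \<omega>) \<partial>M)" for r
    unfolding P_def using f(1)
    by (intro integral_distr[OF assms(2)] borel_measurable_times borel_measurable_indicator) simp_all
  have indep: "indep_vars (\<lambda>_. borel) Xs {1..m}" for m
    by (rule indep_vars_if_zero_restrict[OF assms(3)]) simp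
  have "((\<lambda>r. (\<integral>y. indicator (cball x r) y * f y \<partial>P) / measure P (cball x r)) \<longlongrightarrow> 0) (at_right 0)"
  proof (rule cball_ratio_tendsto_zero[OF P.finite_measure_axioms _ _ f assms(10)[folded f_def]])
    show "sets P = sets borel" by (simp add: P_def)
    show "0 < measure P (cball x r)" if "0 < r" for r
      using assms(6) that unfolding in_support_def P_def by auto
    show "real m * (\<integral>y. indicator (cball x r) y * f y \<partial>P) * (1 - measure P (cball x r)) ^ (m - 1)
        \<le> (\<integral>\<omega>. f (NN m \<omega>) \<partial>M)" if "1 \<le> m" for m r
      unfolding integral_P unfolding P_def using that
      by (intro nearest_neighbor_integral_ge[OF assms(2) _ _ indep f(1-3) assms(9)] assms(4,5)) auto
  qed
  then show ?thesis unfolding integral_P unfolding lebesgue_point_def P_def f_def .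
qed

end
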